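(* Let $\varphi$ be an instance of 2-Clause 3-SAT and let $G(\varphi)$ be the graph constructed from $\varphi$ as described in the context. If $\varphi$ is satisfiable, then $\mathrm{wcol}_2(G(\varphi)) \leq 5$.
   Context: 2-Clause 3-SAT: given a CNF formula $\varphi$ with clauses $c_1,\dots,c_m$ over variables $x_1,\dots,x_n$ in which each clause contains at most 3 literals and each literal ($x_j$ or $\overline{x}_j$) appears in exactly 2 clauses, decide whether $\varphi$ is satisfiable. It is assumed throughout that no variable appears twice in a single clause and that there are no clauses with a single literal (so each clause has 2 or 3 literals). Construction of $G(\varphi)$: for each clause $c_i$ create 6 vertices $u_i^1,\dots,u_i^6$. If $c_i$ contains only 2 literals, add 2 more vertices $f_i, f'_i$, each adjacent to all of $u_i^1,\dots,u_i^6$. For each variable $x_j$ create two vertices $v_j$ and $v'_j$ (for the literals $x_j$ and $\overline{x}_j$) joined by an edge. For each clause $c_i$ containing the literal $x_j$, add an edge from $v_j$ to each of $u_i^1,\dots,u_i^6$; for each clause $c_i$ containing $\overline{x}_j$, add an edge from $v'_j$ to each of $u_i^1,\dots,u_i^6$. Weak coloring numbers: for a graph $G=(V,E)$ and a total order $\sigma$ of $V$, a vertex $v\neq u$ is weakly $r$-reachable from $u$ if $u <_\sigma v$ and there is a $u$–$v$ path $P$ of length at most $r$ such that every vertex $p$ of $P$ other than $u,v$ satisfies $p <_\sigma v$. Let $\mathrm{wreach}_r(u,G_\sigma)$ be the set of such $v$. Then $\mathrm{wcol}_r(G)=\min_\sigma \max_{u\in V}|\mathrm{wreach}_r(u,G_\sigma)|$,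 the minimum over all total orders of $V$. (A vertex is not considered reachable from itself.) *)

theory Defs
  imports Main
begin

text \<open>A literal is a pair (j, b): variable index j (variables are 0..<n);
  b = True means the positive literal x_j, b = False the negative literal.\<close>

type_synonym lit = "nat \<times> bool"

definition two_clause_3sat :: "nat \<Rightarrow> lit set list \<Rightarrow> bool" where
  "two_clause_3sat n cs \<longleftrightarrow>
     (\<forall>c \<in> set cs. finite c \<and> (card c = 2 \<or> card c = 3)
        \<and> (\<forall>(j, b) \<in> c. j < n)
        \<and> (\<forall>j. \<not> ((j, True) \<in> c \<and> (j, False) \<in> c)))
   \<and> (\<forall>j < n. \<forall>b. card {i. i < length cs \<and> (j, b) \<in> cs ! i} = 2)"

definition satisfiable :: "nat \<Rightarrow> lit set list \<Rightarrow> bool" where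
  "satisfiable n cs \<longleftrightarrow>
     (\<exists>a :: nat \<Rightarrow> bool. \<forall>c \<in> set cs. \<exists>(j, b) \<in> c. a j = b)"

datatype vert = U nat nat | F nat | F' nat | V nat | V' nat

definition G_verts :: "nat \<Rightarrow> lit set list \<Rightarrow> vert set" where
  "G_verts n cs =
     {U i k | i k. i < length cs \<and> k \<in> {1..6}}
   \<union> {F i | i. i < length cs \<and> card (cs ! i) = 2}
   \<union> {F' i | i. i < length cs \<and> card (cs ! i) = 2}
   \<union> {V j | j. j < n} \<union> {V' j | j. j < n}"

definition G_base :: "nat \<Rightarrow> lit set list \<Rightarrow> vert \<Rightarrow> vert \<Rightarrow> bool" where
  "G_base n cs x y \<longleftrightarrow>
     (\<exists>i k. i < length cs \<and> k \<in> {1..6} \<and> card (cs ! i) = 2 \<and> x = F i \<and> y = U i k)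
   \<or> (\<exists>i k. i < length cs \<and> k \<in> {1..6} \<and> card (cs ! i) = 2 \<and> x = F' i \<and> y = U i k)
   \<or> (\<exists>j. j < n \<and> x = V j \<and> y = V' j)
   \<or> (\<exists>i k j. i < length cs \<and> k \<in> {1..6} \<and> j < n \<and> (j, True) \<in> cs ! i \<and> x = V j \<and> y = U i k)
   \<or> (\<exists>i k j. i < length cs \<and> k \<in> {1..6} \<and> j < n \<and> (j, False) \<in> cs ! i \<and> x = V' j \<and> y = U i k)"

definition G_adj :: "nat \<Rightarrow> lit set list \<Rightarrow> vert \<Rightarrow> vert \<Rightarrow> bool" where
  "G_adj n cs x y \<longleftrightarrow> G_base n cs x y \<or> G_base n cs y x"

definition ord_before :: "'a list \<Rightarrow> 'a \<Rightarrow> 'a \<Rightarrow> bool" where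
  "ord_before \<sigma> u v \<longleftrightarrow> (\<exists>i j. i < j \<and> j < length \<sigma> \<and> \<sigma> ! i = u \<and> \<sigma> ! j = v)"

definition is_path :: "('a \<Rightarrow> 'a \<Rightarrow> bool) \<Rightarrow> 'a list \<Rightarrow> bool" where
  "is_path E p \<longleftrightarrow> p \<noteq> [] \<and> distinct p \<and> (\<forall>i. Suc i < length p \<longrightarrow> E (p ! i) (p ! Suc i))"

definition wreach :: "('a \<Rightarrow> 'a \<Rightarrow> bool) \<Rightarrow> 'a list \<Rightarrow> nat \<Rightarrow> 'a \<Rightarrow> 'a set" where
  "wreach E \<sigma> r u = {v. v \<noteq> u \<and> ord_before \<sigma> u v \<and>
     (\<exists>p. is_path E p \<and> hd p = u \<and> last p = v \<and> length p \<le> Suc r \<and>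
          (\<forall>x \<in> set p. x \<noteq> u \<and> x \<noteq> v \<longrightarrow> ord_before \<sigma> x v))}"

definition wcol :: "'a set \<Rightarrow> ('a \<Rightarrow> 'a \<Rightarrow> bool) \<Rightarrow> nat \<Rightarrow> nat" where
  "wcol Vs E r = Min {Max (insert 0 ((\<lambda>u. card (wreach E \<sigma> r u)) ` Vs)) | \<sigma>.
                        distinct \<sigma> \<and> set \<sigma> = Vs}"

end

theory Submission
  imports Defs
begin

text \<open>Fix a satisfying assignment and order the vertices in four layers: the clause vertices
  u_i^k, then the f_i and f'_i, then the vertices of false literals, then those of true literals.
  From u_i^k one weakly 2-reaches the literals of c_i, f_i and f'_i if c_i is a 2-clause, and the
  negations of the false literals of c_i; as c_i contains a true literal, these are at most
  2 + 2 + 1 or 3 + 2 vertices. From f_i one reaches only f'_i and the two literals of c_i. From a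
  literal one reaches its negation and at most 2 further literals in each of the two clauses
  containing it.\<close>

lemma finite_card_le_subset:
  assumes "A \<subseteq> B" and "finite B" and "card B \<le> k"
  shows "finite A \<and> card A \<le> k"
  using assms by (meson card_mono finite_subset le_trans)

lemma ord_before_sorted_rank:
  assumes "sorted (map r \<sigma>)" and "ord_before \<sigma> x y"
  shows "r x \<le> r y"
proof -
  from assms(2) obtain i j where "i < j" "j < length \<sigma>" "\<sigma> ! i = x" "\<sigma> ! j = y"
    unfolding ord_before_def by auto
  with sorted_nth_mono[OF assms(1), of i j] show ?thesis by simp
qed

lemma is_path_Cons_Cons:
  "is_path E (x # y # p) \<longleftrightarrow> E x y \<and> x \<notin> set (y # p) \<and> is_path E (y # p)"
  unfolding is_path_def by (auto simp: nth_Cons split: nat.splits)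

lemma wreach_2_D:
  assumes "v \<in> wreach E \<sigma> 2 u"
  shows "v \<noteq> u \<and> ord_before \<sigma> u v \<and>
    (E u v \<or> (\<exists>w. E u w \<and> E w v \<and> w \<noteq> u \<and> w \<noteq> v \<and> ord_before \<sigma> w v))"
proof -
  from assms obtain p where v: "v \<noteq> u" "ord_before \<sigma> u v"
    and p: "is_path E p" "hd p = u" "last p = v" "length p \<le> 3"
    and inner: "\<forall>x \<in> set p. x \<noteq> u \<and> x \<noteq> v \<longrightarrow> ord_before \<sigma> x v"
    unfolding wreach_def by auto
  have "p \<noteq> []" using p(1) unfolding is_path_def by simp
  with p(2-4) v(1) consider "p = [u, v]" | w where "p = [u, w, v]"
    by (auto simp: numeral_3_eq_3 le_Suc_eq length_Suc_conv)
  then show ?thesis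
    by cases (use p(1) inner v in \<open>auto simp: is_path_Cons_Cons\<close>)
qed

lemma wcol_le:
  assumes "finite Vs" and "distinct \<sigma>" and "set \<sigma> = Vs"
    and "\<And>u. u \<in> Vs \<Longrightarrow> card (wreach E \<sigma> r u) \<le> k"
  shows "wcol Vs E r \<le> k"
proof -
  let ?width = "\<lambda>\<sigma>. Max (insert 0 ((\<lambda>u. card (wreach E \<sigma> r u)) ` Vs))"
  have "finite {\<sigma>. distinct \<sigma> \<and> set \<sigma> = Vs}"
    by (rule finite_subset[OF _ finite_subset_distinct[OF assms(1)]]) auto
  then have "wcol Vs E r \<le> ?width \<sigma>"
    unfolding wcol_def Setcompr_eq_image using assms(2,3) by (intro Min_le) auto
  also have "?width \<sigma> \<le> k"
    using assms(1,4) by simp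
  finally show ?thesis .
qed

text \<open>Contains wreach E \<sigma> 2 u for every \<sigma> listing the vertices by non-decreasing rank r,
  however ties are broken.\<close>
definition rank_reach_2 :: "('a \<Rightarrow> 'a \<Rightarrow> bool) \<Rightarrow> ('a \<Rightarrow> 'b::linorder) \<Rightarrow> 'a \<Rightarrow> 'a set" where
  "rank_reach_2 E r u = {v. v \<noteq> u \<and> r u \<le> r v \<and>
     (E u v \<or> (\<exists>w. E u w \<and> E w v \<and> w \<noteq> u \<and> w \<noteq> v \<and> r w \<le> r v))}"

lemma wreach_2_subset_rank_reach_2:
  assumes "sorted (map r \<sigma>)"
  shows "wreach E \<sigma> 2 u \<subseteq> rank_reach_2 E r u"
proof
  fix v assume "v \<in> wreach E \<sigma> 2 u"
  with wreach_2_D ord_before_sorted_rank[OF assms] show "v \<in> rank_reach_2 E r u"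
    unfolding rank_reach_2_def by fast
qed

lemma wcol_2_le_by_rank:
  fixes r :: "'a \<Rightarrow> 'b::linorder"
  assumes "finite Vs"
    and "\<And>u. u \<in> Vs \<Longrightarrow> finite (rank_reach_2 E r u) \<and> card (rank_reach_2 E r u) \<le> k"
  shows "wcol Vs E 2 \<le> k"
proof -
  obtain xs where "distinct xs" "set xs = Vs"
    using finite_distinct_list[OF assms(1)] by blast
  then have \<sigma>: "distinct (sort_key r xs)" "set (sort_key r xs) = Vs"
    and sorted: "sorted (map r (sort_key r xs))"
    by (simp_all add: distinct_sort)
  show ?thesis
  proof (rule wcol_le[OF assms(1) \<sigma>])
    fix u assume "u \<in> Vs"
    then show "card (wreach E (sort_key r xs) 2 u) \<le> k"
      using finite_card_le_subset[OF wreach_2_subset_rank_reach_2[OF sorted]] assms(2) by blast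
  qed
qed

fun lit_vert :: "lit \<Rightarrow> vert" where
  "lit_vert (j, True) = V j"
| "lit_vert (j, False) = V' j"

definition negate :: "lit \<Rightarrow> lit" where
  "negate l = (fst l, \<not> snd l)"

lemma negate_simps [simp]:
  "fst (negate l) = fst l" "snd (negate l) = (\<not> snd l)" "negate (negate l) = l"
  by (simp_all add: negate_def)

lemma lit_vert_eq_iff [simp]: "lit_vert l = lit_vert l' \<longleftrightarrow> l = l'"
  by (cases l; cases l'; cases "snd l"; cases "snd l'") auto

lemma inj_lit_vert: "inj lit_vert"
  by (rule injI) simp

lemma V_eq_lit_vert_iff [simp]:
  "V j = lit_vert l \<longleftrightarrow> l = (j, True)" "V' j = lit_vert l \<longleftrightarrow> l = (j, False)"
  by (cases l; cases "snd l"; auto)+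

lemma lit_vert_neq [simp]: "U i k \<noteq> lit_vert l" "F i \<noteq> lit_vert l" "F' i \<noteq> lit_vert l"
  by (cases l; cases "snd l"; auto)+

lemma G_adj_U_iff:
  "G_adj n cs (U i k) y \<longleftrightarrow> i < length cs \<and> k \<in> {1..6} \<and>
     (card (cs ! i) = 2 \<and> (y = F i \<or> y = F' i) \<or> (\<exists>l \<in> cs ! i. fst l < n \<and> y = lit_vert l))"
  by (cases y) (auto simp: G_adj_def G_base_def)

lemma G_adj_F_iff:
  "G_adj n cs (F i) y \<longleftrightarrow> (\<exists>k. i < length cs \<and> k \<in> {1..6} \<and> card (cs ! i) = 2 \<and> y = U i k)"
  "G_adj n cs (F' i) y \<longleftrightarrow> (\<exists>k. i < length cs \<and> k \<in> {1..6} \<and> card (cs ! i) = 2 \<and> y = U i k)"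
  by (cases y; auto simp: G_adj_def G_base_def)+

lemma G_adj_lit_vert_iff:
  "G_adj n cs (lit_vert l) y \<longleftrightarrow> fst l < n \<and>
     (y = lit_vert (negate l) \<or> (\<exists>i k. i < length cs \<and> k \<in> {1..6} \<and> l \<in> cs ! i \<and> y = U i k))"
  by (cases l; cases "snd l"; cases y) (auto simp: G_adj_def G_base_def negate_def)

lemma finite_G_verts: "finite (G_verts n cs)"
proof -
  have "G_verts n cs \<subseteq> case_prod U ` ({..<length cs} \<times> {1..6}) \<union> F ` {..<length cs}
     \<union> F' ` {..<length cs} \<union> V ` {..<n} \<union> V' ` {..<n}"
    unfolding G_verts_def by auto
  then show ?thesis by (rule finite_subset) auto
qed

fun truth_rank :: "(nat \<Rightarrow> bool) \<Rightarrow> vert \<Rightarrow> nat" where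
  "truth_rank a (U i k) = 0"
| "truth_rank a (F i) = 1"
| "truth_rank a (F' i) = 1"
| "truth_rank a (V j) = (if a j then 3 else 2)"
| "truth_rank a (V' j) = (if a j then 2 else 3)"

lemma truth_rank_lit_vert [simp]:
  "truth_rank a (lit_vert l) = (if a (fst l) = snd l then 3 else 2)"
  by (cases l; cases "snd l") auto

lemma rank_reach_2_U_subset:
  "rank_reach_2 (G_adj n cs) (truth_rank a) (U i k) \<subseteq>
     (if card (cs ! i) = 2 then {F i, F' i} else {}) \<union> lit_vert ` cs ! i
     \<union> lit_vert ` negate ` {l \<in> cs ! i. a (fst l) \<noteq> snd l}"
  by (auto simp: rank_reach_2_def G_adj_U_iff G_adj_F_iff G_adj_lit_vert_iff
      inj_image_mem_iff[OF inj_lit_vert] split: if_splits)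

lemma rank_reach_2_F_subset:
  assumes "u = F i \<or> u = F' i"
  shows "rank_reach_2 (G_adj n cs) (truth_rank a) u \<subseteq> {F i, F' i} \<union> lit_vert ` cs ! i"
  using assms by (auto simp: rank_reach_2_def G_adj_U_iff G_adj_F_iff)

lemma rank_reach_2_lit_vert_subset:
  "rank_reach_2 (G_adj n cs) (truth_rank a) (lit_vert l) \<subseteq>
     insert (lit_vert (negate l)) (\<Union>i \<in> {i. i < length cs \<and> l \<in> cs ! i}. lit_vert ` (cs ! i - {l}))"
  by (auto simp: rank_reach_2_def G_adj_U_iff G_adj_F_iff G_adj_lit_vert_iff
      inj_image_mem_iff[OF inj_lit_vert] split: if_splits)

context
  fixes n :: nat and cs :: "lit set list"
  assumes two_clause: "two_clause_3sat n cs"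
begin

lemma clause_finite_card:
  assumes "i < length cs"
  shows "finite (cs ! i)" and "card (cs ! i) = 2 \<or> card (cs ! i) = 3"
  using nth_mem[OF assms] two_clause unfolding two_clause_3sat_def by auto

lemma card_clauses_containing:
  assumes "fst l < n"
  shows "card {i. i < length cs \<and> l \<in> cs ! i} = 2"
  using assms two_clause unfolding two_clause_3sat_def by (cases l) auto

lemma card_rank_reach_2_U:
  assumes i: "i < length cs" and satisfied: "\<exists>l \<in> cs ! i. a (fst l) = snd l"
  shows "finite (rank_reach_2 (G_adj n cs) (truth_rank a) (U i k))
    \<and> card (rank_reach_2 (G_adj n cs) (truth_rank a) (U i k)) \<le> 5"
proof -
  let ?c = "cs ! i" and ?F = "if card (cs ! i) = 2 then {F i, F' i} else {}"
  let ?false = "{l \<in> cs ! i. a (fst l) \<noteq> snd l}"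
  let ?S = "?F \<union> lit_vert ` ?c \<union> lit_vert ` negate ` ?false"
  have c: "finite ?c" "card ?c = 2 \<or> card ?c = 3"
    using clause_finite_card[OF i] by auto
  then have "finite ?false"
    by simp
  have "?false \<subset> ?c"
    using satisfied by auto
  then have "card ?false < card ?c"
    using c(1) by (rule psubset_card_mono[rotated])
  moreover have "card ?S \<le> card ?F + card (lit_vert ` ?c) + card (lit_vert ` negate ` ?false)"
    using card_Un_le[of "?F \<union> lit_vert ` ?c" "lit_vert ` negate ` ?false"]
      card_Un_le[of ?F "lit_vert ` ?c"] by linarith
  moreover have "card (lit_vert ` negate ` ?false) \<le> card ?false"
    using card_image_le[of "negate ` ?false" lit_vert] card_image_le[of ?false negate]
      \<open>finite ?false\<close> by simp
  moreover have "card (lit_vert ` ?c) \<le> card ?c"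
    using c(1) by (rule card_image_le)
  ultimately have "card ?S \<le> 5"
    using c(2) by auto
  moreover have "finite ?S"
    using c(1) by simp
  ultimately show ?thesis
    using finite_card_le_subset[OF rank_reach_2_U_subset] by blast
qed

lemma card_rank_reach_2_F:
  assumes i: "i < length cs" and u: "u = F i \<or> u = F' i"
  shows "finite (rank_reach_2 (G_adj n cs) (truth_rank a) u)
    \<and> card (rank_reach_2 (G_adj n cs) (truth_rank a) u) \<le> 5"
proof -
  have c: "finite (cs ! i)" "card (cs ! i) \<le> 3"
    using clause_finite_card[OF i] by auto
  have "card ({F i, F' i} \<union> lit_vert ` cs ! i) \<le> card {F i, F' i} + card (lit_vert ` cs ! i)"
    by (rule card_Un_le)
  also have "\<dots> \<le> 5"
    using card_image_le[OF c(1), of lit_vert] c(2) by simp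
  finally show ?thesis
    using finite_card_le_subset[OF rank_reach_2_F_subset[OF u]] c(1) by simp
qed

lemma card_rank_reach_2_lit_vert:
  assumes l: "fst l < n"
  shows "finite (rank_reach_2 (G_adj n cs) (truth_rank a) (lit_vert l))
    \<and> card (rank_reach_2 (G_adj n cs) (truth_rank a) (lit_vert l)) \<le> 5"
proof -
  let ?I = "{i. i < length cs \<and> l \<in> cs ! i}"
  let ?others = "\<lambda>i. lit_vert ` (cs ! i - {l})"
  have finite_others: "finite (\<Union>i \<in> ?I. ?others i)"
    using clause_finite_card(1) by simp
  have card_others: "card (?others i) \<le> 2" if "i \<in> ?I" for i
  proof -
    have "finite (cs ! i)" "card (cs ! i) \<le> 3" "l \<in> cs ! i"
      using that clause_finite_card[of i] by auto
    then show ?thesis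
      using card_image_le[of "cs ! i - {l}" lit_vert] by (simp add: card_Diff_singleton)
  qed
  have "card (insert (lit_vert (negate l)) (\<Union>i \<in> ?I. ?others i))
      \<le> Suc (card (\<Union>i \<in> ?I. ?others i))"
    using finite_others by (simp add: card_insert_if)
  also have "\<dots> \<le> Suc (\<Sum>i \<in> ?I. card (?others i))"
    using card_UN_le[of ?I ?others] by simp
  also have "\<dots> \<le> Suc (card ?I * 2)"
    using sum_bounded_above[of ?I "\<lambda>i. card (?others i)" 2] card_others by simp
  also have "\<dots> = 5"
    using card_clauses_containing[OF l] by simp
  finally show ?thesis
    using finite_card_le_subset[OF rank_reach_2_lit_vert_subset] finite_others by simp
qed

lemma card_rank_reach_2_le_5:
  assumes satisfied: "\<forall>c \<in> set cs. \<exists>l \<in> c. a (fst l) = snd l" and u: "u \<in> G_verts n cs"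
  shows "finite (rank_reach_2 (G_adj n cs) (truth_rank a) u)
    \<and> card (rank_reach_2 (G_adj n cs) (truth_rank a) u) \<le> 5"
proof -
  from u consider i k where "i < length cs" "u = U i k"
    | i where "i < length cs" "u = F i \<or> u = F' i"
    | l where "fst l < n" "u = lit_vert l"
    unfolding G_verts_def by (auto; metis fst_conv lit_vert.simps)
  then show ?thesis
  proof cases
    case (1 i k)
    then show ?thesis
      using card_rank_reach_2_U[OF 1(1) bspec[OF satisfied nth_mem[OF 1(1)]]] by simp
  next
    case (2 i)
    then show ?thesis
      by (rule card_rank_reach_2_F)
  next
    case (3 l)
    then show ?thesis
      using card_rank_reach_2_lit_vert[OF 3(1)] by simp
  qed
qed

end

theorem lemma3p2:
  fixes n :: nat and cs :: "lit set list"
  assumes "two_clause_3sat n cs"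
    and "satisfiable n cs"
  shows "wcol (G_verts n cs) (G_adj n cs) 2 \<le> 5"
proof -
  obtain a where satisfied: "\<forall>c \<in> set cs. \<exists>l \<in> c. a (fst l) = snd l"
    using assms(2) unfolding satisfiable_def split_def by blast
  show ?thesis
    by (rule wcol_2_le_by_rank[OF finite_G_verts card_rank_reach_2_le_5[OF assms(1) satisfied]])
qed

end
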